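(* Let $G$ be a discrete submonoid of $\mathbb R_{\ge0}$. Let $(C,\{\mathfrak m_k\}_{k\ge0})$ be a $G$-gapped filtered $A_\infty$ algebra over $\Lambda_0^{\mathbb Z_2}$ and $(D,\{\mathfrak n_k\}_{k\ge0})$ a $G$-gapped right filtered $A_\infty$ module over it. Suppose ${\bf 1}\in D$ is a $G$-gapped cyclic element. Then there exists a unique $G$-gapped bounding cochain $b$ of $(C,\{\mathfrak m_k\})$ such that $$d^b({\bf 1}):=\sum_{k=0}^\infty\mathfrak n_k({\bf 1};b,\dots,b)=0.$$
   Context: $\Lambda_0^{\mathbb Z_2}$ is the ring of formal sums $\sum_i a_iT^{\lambda_i}$, $a_i\in\mathbb Z_2$, $0\le\lambda_0<\lambda_1<\cdots\to\infty$; $\Lambda_+^{\mathbb Z_2}$ is the ideal of sums with all exponents $>0$. A discrete submonoid $G\subset\mathbb R_{\ge0}$ is a discrete subset containing $0$ and closed under addition. $C$ (resp. $D$) is the $T$-adic completion of $\overline C\otimes\Lambda_0^{\mathbb Z_2}$ (resp. $\overline D\otimes\Lambda_0^{\mathbb Z_2}$) for $\mathbb Z_2$-vector spaces $\overline C,\overline D$. An element $x$ is $G$-gapped if $x=\sum_{\lambda\in G}T^\lambda x_\lambda$ with $x_\lambda\in\overline C$; a $\Lambda_0$-(multi)linear map is $G$-gapped if it equals $\sum_{\lambda\in G}T^\lambda\varphi_\lambda$ with $\varphi_\lambda$ $\mathbb Z_2$-(multi)linear on the $\overline{\ \cdot\ }$ spaces. A $G$-gapped filtered $A_\infty$ algebra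 is a family of $G$-gapped maps $\mathfrak m_k:C^{\otimes k}\to C$, $k\ge0$, with $\mathfrak m_0\equiv0\bmod\Lambda_+^{\mathbb Z_2}$, satisfying for all $k\ge0$ and $x_1,\dots,x_k$: $\sum_{1\le i\le j+1\le k+1}\mathfrak m_{k-j+i}(x_1,\dots,x_{i-1},\mathfrak m_{j-i+1}(x_i,\dots,x_j),x_{j+1},\dots,x_k)=0$ (no signs over $\mathbb Z_2$; $j=i-1$ inserts $\mathfrak m_0$). A $G$-gapped right filtered $A_\infty$ module is a family of $G$-gapped maps $\mathfrak n_k:D\otimes C^{\otimes k}\to D$, $k\ge0$, with, for all $k\ge0$: $\sum_{\ell=0}^k\mathfrak n_{k-\ell}(\mathfrak n_\ell(y;x_1,\dots,x_\ell);x_{\ell+1},\dots,x_k)+\sum_{1\le i\le j+1\le k+1}\mathfrak n_{k-j+i-1}(y;x_1,\dots,x_{i-1},\mathfrak m_{j-i+1}(x_i,\dots,x_j),x_{j+1},\dots,x_k)=0$. An element ${\bf 1}\in D$ is a cyclic element if (1) the map $C\to D$, $x\mapsto\mathfrak n_1({\bf 1};x)$, is a $\Lambda_0^{\mathbb Z_2}$-module isomorphism, and (2) $\mathfrak n_0({\bf 1})\equiv0\bmod\Lambda_+^{\mathbb Z_2}$. A bounding cochain is $b\in C\otimes_{\Lambda_0}\Lambda_+^{\mathbb Z_2}$ with $\sum_{k\ge0}\mathfrak m_k(b,\dots,b)=0$ (the sums converge $T$-adically). *)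

theory Defs
  imports Complex_Main "HOL-Library.Function_Algebras"
begin

text \<open>A Z2-vector space is an abelian group in which v + v = 0
(Z2-linear = additive).  An element of the T-adic completion C of
Cbar (x) Lambda_0 is the family of its coefficients: a function
real => Cbar, vanishing at negative exponents, with only finitely many
nonzero coefficients below any bound.\<close>

definition discrete_submonoid :: "real set \<Rightarrow> bool" where
  "discrete_submonoid G \<longleftrightarrow> 0 \<in> G \<and> G \<subseteq> {0..} \<and> (\<forall>a\<in>G. \<forall>b\<in>G. a + b \<in> G)
     \<and> (\<forall>c. finite (G \<inter> {..c}))"

definition nov :: "(real \<Rightarrow> 'a::zero) set" where
  "nov = {f. (\<forall>\<nu><0. f \<nu> = 0) \<and> (\<forall>c. finite {\<nu>. \<nu> \<le> c \<and> f \<nu> \<noteq> 0})}"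

definition gapped :: "real set \<Rightarrow> (real \<Rightarrow> 'a::zero) \<Rightarrow> bool" where
  "gapped G f \<longleftrightarrow> (\<forall>\<nu>. f \<nu> \<noteq> 0 \<longrightarrow> \<nu> \<in> G)"

definition multiadd :: "('a::plus list \<Rightarrow> 'b::plus) \<Rightarrow> bool" where
  "multiadd F \<longleftrightarrow> (\<forall>xs i a b. i < length xs \<longrightarrow>
      F (xs[i := a + b]) = F (xs[i := a]) + F (xs[i := b]))"

definition modadd :: "('d::plus \<Rightarrow> 'c::plus list \<Rightarrow> 'd) \<Rightarrow> bool" where
  "modadd F \<longleftrightarrow> (\<forall>y y' xs. F (y + y') xs = F y xs + F y' xs) \<and> (\<forall>y. multiadd (F y))"

text \<open>The G-gapped map sum_{l in G} T^l m k l : C^k -> C, extended to C.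
  The coefficient at nu collects all l in G and exponents mu_i of the inputs with
  l + sum mu_i = nu.\<close>
definition ext_alg :: "real set \<Rightarrow> (nat \<Rightarrow> real \<Rightarrow> 'c list \<Rightarrow> 'c) \<Rightarrow> (real \<Rightarrow> 'c) list
    \<Rightarrow> real \<Rightarrow> 'c::comm_monoid_add" where
  "ext_alg G m xs = (\<lambda>\<nu>. \<Sum>(l, ms) \<in> {(l, ms). l \<in> G \<and> length ms = length xs
        \<and> (\<forall>i<length xs. (xs ! i) (ms ! i) \<noteq> 0) \<and> l + sum_list ms = \<nu>}.
      m (length xs) l (map (\<lambda>(x, \<mu>). x \<mu>) (zip xs ms)))"

text \<open>The G-gapped module map sum_{l in G} T^l n k l : D (x) C^k -> D, extended.\<close>
definition ext_mod :: "real set \<Rightarrow> (nat \<Rightarrow> real \<Rightarrow> 'd \<Rightarrow> 'c list \<Rightarrow> 'd) \<Rightarrow> (real \<Rightarrow> 'd)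
    \<Rightarrow> (real \<Rightarrow> 'c::zero) list \<Rightarrow> real \<Rightarrow> 'd::comm_monoid_add" where
  "ext_mod G n y xs = (\<lambda>\<nu>. \<Sum>(l, \<mu>, ms) \<in> {(l, \<mu>, ms). l \<in> G \<and> y \<mu> \<noteq> 0
        \<and> length ms = length xs
        \<and> (\<forall>i<length xs. (xs ! i) (ms ! i) \<noteq> 0) \<and> l + \<mu> + sum_list ms = \<nu>}.
      n (length xs) l (y \<mu>) (map (\<lambda>(x, \<mu>). x \<mu>) (zip xs ms)))"

definition ainf_alg :: "real set \<Rightarrow> (nat \<Rightarrow> real \<Rightarrow> 'c list \<Rightarrow> 'c::ab_group_add) \<Rightarrow> bool" where
  "ainf_alg G m \<longleftrightarrow> (\<forall>k l. multiadd (m k l)) \<and> ext_alg G m [] 0 = 0 \<and>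
     (\<forall>xs. set xs \<subseteq> nov \<longrightarrow>
        (\<Sum>a\<le>length xs. \<Sum>b\<in>{a..length xs}.
           ext_alg G m (take a xs @ [ext_alg G m (take (b - a) (drop a xs))] @ drop b xs)) = 0)"

definition ainf_mod :: "real set \<Rightarrow> (nat \<Rightarrow> real \<Rightarrow> 'c list \<Rightarrow> 'c::ab_group_add)
    \<Rightarrow> (nat \<Rightarrow> real \<Rightarrow> 'd \<Rightarrow> 'c list \<Rightarrow> 'd::ab_group_add) \<Rightarrow> bool" where
  "ainf_mod G m n \<longleftrightarrow> (\<forall>k l. modadd (n k l)) \<and>
     (\<forall>y xs. y \<in> nov \<longrightarrow> set xs \<subseteq> nov \<longrightarrow>
        (\<Sum>l\<le>length xs. ext_mod G n (ext_mod G n y (take l xs)) (drop l xs))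
        + (\<Sum>a\<le>length xs. \<Sum>b\<in>{a..length xs}.
           ext_mod G n y (take a xs @ [ext_alg G m (take (b - a) (drop a xs))] @ drop b xs)) = 0)"

text \<open>Cyclic element.  The map x |-> n_1(one; x) is Lambda_0-linear by construction,
  so being a Lambda_0-module isomorphism C -> D means being a bijection C -> D.\<close>
definition cyclic_elem :: "real set \<Rightarrow> (nat \<Rightarrow> real \<Rightarrow> 'd \<Rightarrow> 'c::zero list \<Rightarrow> 'd)
    \<Rightarrow> (real \<Rightarrow> 'd::comm_monoid_add) \<Rightarrow> bool" where
  "cyclic_elem G n one \<longleftrightarrow> one \<in> nov
     \<and> bij_betw (\<lambda>x::real \<Rightarrow> 'c. ext_mod G n one [x]) nov nov
     \<and> ext_mod G n one [] 0 = 0"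

definition T_sums :: "(nat \<Rightarrow> real \<Rightarrow> 'a::comm_monoid_add) \<Rightarrow> (real \<Rightarrow> 'a) \<Rightarrow> bool" where
  "T_sums f s \<longleftrightarrow> (\<forall>c. \<exists>K. \<forall>N\<ge>K. \<forall>\<nu>\<le>c. (\<Sum>k<N. f k \<nu>) = s \<nu>)"

definition bounding_cochain :: "real set \<Rightarrow> (nat \<Rightarrow> real \<Rightarrow> 'c list \<Rightarrow> 'c::ab_group_add)
    \<Rightarrow> (real \<Rightarrow> 'c) \<Rightarrow> bool" where
  "bounding_cochain G m b \<longleftrightarrow> b \<in> nov \<and> b 0 = 0 \<and> T_sums (\<lambda>k. ext_alg G m (replicate k b)) 0"

end

theory Submission
  imports Defs
begin

text \<open>Everything is computed coefficientwise along the discrete monoid \<open>G\<close>.  The constant part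
  \<open>lead\<close> of \<open>x \<mapsto> n\<^sub>1(1; x)\<close> is a bijection between constant coefficients.  For
  \<open>b \<in> C \<otimes> \<Lambda>\<^sub>+\<close> only finitely many \<open>k\<close> contribute to each coefficient of
  \<open>d\<^sup>b(1) = \<Sum>\<^sub>k n\<^sub>k(1; b, \<dots>, b)\<close>, and its coefficient at \<open>\<nu>\<close> is \<open>lead (b\<^sub>\<nu>)\<close> plus a function of
  the coefficients of \<open>b\<close> below \<open>\<nu>\<close>.  So \<open>d\<^sup>b(1) = 0\<close> determines \<open>b\<close> by well-founded recursion
  along \<open>G\<close>.  Finally, if \<open>d\<^sup>b(1) = 0\<close>, the \<open>A\<^sub>\<infinity>\<close> module relation for \<open>(1; b, \<dots>, b)\<close>, evaluated
  at the lowest nonzero coefficient \<open>\<nu>\<close> of \<open>M = \<Sum>\<^sub>k m\<^sub>k(b, \<dots>, b)\<close>, reduces to \<open>lead (M\<^sub>\<nu>) = 0\<close>;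
  hence \<open>M = 0\<close>.\<close>

section \<open>Finite sums and \<open>T\<close>-adic convergence\<close>

lemma sum_apply: "(sum f A) x = (\<Sum>a\<in>A. f a x)"
  by (induction A rule: infinite_finite_induct) auto

lemma sum_antidiagonal_eq_square:
  fixes f :: "nat \<Rightarrow> nat \<Rightarrow> 'a::comm_monoid_add"
  assumes "\<And>i j. B < i \<or> B < j \<Longrightarrow> f i j = 0" and "2 * B < K"
  shows "(\<Sum>k<K. \<Sum>i\<le>k. f i (k - i)) = (\<Sum>i\<le>B. \<Sum>j\<le>B. f i j)"
proof -
  have "(\<Sum>k<K. \<Sum>i\<le>k. f i (k - i)) = (\<Sum>(i, j)\<in>{(i, j). i + j < K}. f i j)"
    by (rule sum.triangle_reindex[symmetric])
  also have "\<dots> = (\<Sum>(i, j)\<in>{..B} \<times> {..B}. f i j)"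
  proof (rule sum.mono_neutral_right)
    show "finite {(i, j). i + j < K}"
      by (rule finite_subset[of _ "{..<K} \<times> {..<K}"]) auto
    show "{..B} \<times> {..B} \<subseteq> {(i, j). i + j < K}" using assms(2) by auto
    show "\<forall>p\<in>{(i, j). i + j < K} - {..B} \<times> {..B}. (case p of (i, j) \<Rightarrow> f i j) = 0"
    proof
      fix p assume "p \<in> {(i, j). i + j < K} - {..B} \<times> {..B}"
      then obtain i j where "p = (i, j)" and "\<not> (i \<le> B \<and> j \<le> B)" by auto
      moreover from this(2) have "B < i \<or> B < j" by linarith
      ultimately show "(case p of (i, j) \<Rightarrow> f i j) = 0" using assms(1) by simp
    qed
  qed
  also have "\<dots> = (\<Sum>i\<le>B. \<Sum>j\<le>B. f i j)"
    by (simp add: sum.cartesian_product)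
  finally show ?thesis .
qed

lemma sum_antidiagonal3_eq_cube:
  fixes h :: "nat \<Rightarrow> nat \<Rightarrow> nat \<Rightarrow> 'a::comm_monoid_add"
  assumes h0: "\<And>a r j. B < a \<or> B < r \<or> B < j \<Longrightarrow> h a r j = 0" and K: "4 * B < K"
  shows "(\<Sum>k<K. \<Sum>a\<le>k. \<Sum>c\<in>{a..k}. h a (c - a) (k - c)) = (\<Sum>a\<le>B. \<Sum>r\<le>B. \<Sum>j\<le>B. h a r j)"
proof -
  define F where "F a s = (\<Sum>r\<le>s. h a r (s - r))" for a s
  have inner: "(\<Sum>c\<in>{a..k}. h a (c - a) (k - c)) = F a (k - a)" if "a \<le> k" for a k
  proof -
    have "(\<Sum>c\<in>{a..k}. h a (c - a) (k - c)) = (\<Sum>r\<in>{0..k - a}. h a (r + a - a) (k - (r + a)))"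
      using sum.shift_bounds_cl_nat_ivl[of "\<lambda>c. h a (c - a) (k - c)" 0 a "k - a"] that by simp
    then show ?thesis unfolding F_def by (simp add: atLeast0AtMost algebra_simps)
  qed
  have F_zero: "F a s = 0" if "2 * B < a \<or> 2 * B < s" for a s
    unfolding F_def by (rule sum.neutral) (use that in \<open>auto intro!: h0\<close>)
  have F_square: "(\<Sum>s\<le>2 * B. F a s) = (\<Sum>r\<le>B. \<Sum>j\<le>B. h a r j)" for a
    using sum_antidiagonal_eq_square[of B "h a" "Suc (2 * B)"] h0
    by (simp add: F_def lessThan_Suc_atMost)
  have "(\<Sum>k<K. \<Sum>a\<le>k. \<Sum>c\<in>{a..k}. h a (c - a) (k - c)) = (\<Sum>k<K. \<Sum>a\<le>k. F a (k - a))"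
    by (intro sum.cong refl) (simp add: inner)
  also have "\<dots> = (\<Sum>a\<le>2 * B. \<Sum>s\<le>2 * B. F a s)"
    by (rule sum_antidiagonal_eq_square[OF F_zero]) (use K in auto)
  also have "\<dots> = (\<Sum>a\<le>B. \<Sum>r\<le>B. \<Sum>j\<le>B. h a r j)"
    unfolding F_square by (intro sum.mono_neutral_right) (auto intro!: sum.neutral h0)
  finally show ?thesis .
qed

lemma map_zip_replicate:
  "length ms = k \<Longrightarrow> map (\<lambda>(x, \<mu>). x \<mu>) (zip (replicate k f) ms) = map f ms"
  by (induction ms arbitrary: k) (auto simp: Suc_length_conv)

lemma map_zip_update:
  assumes "length ms = length xs" and "i < length xs"
  shows "map (\<lambda>(x, \<mu>). x \<mu>) (zip (xs[i := u]) ms) = (map (\<lambda>(x, \<mu>). x \<mu>) (zip xs ms))[i := u (ms ! i)]"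
  using assms by (intro nth_equalityI) (auto simp: nth_list_update)

lemma multiadd_zero:
  fixes F :: "'a::monoid_add list \<Rightarrow> 'b::ab_group_add"
  assumes "multiadd F" and "i < length xs" and "xs ! i = 0"
  shows "F xs = 0"
proof -
  have "F (xs[i := 0 + 0]) = F (xs[i := 0]) + F (xs[i := 0])"
    using assms(1,2) unfolding multiadd_def by blast
  then show ?thesis using assms(3) by (simp add: list_update_id[of xs i, simplified assms(3)])
qed

lemma modadd_zero:
  fixes F :: "'d::ab_group_add \<Rightarrow> 'c::monoid_add list \<Rightarrow> 'd"
  assumes "modadd F"
  shows "F 0 xs = 0"
proof -
  have "F (0 + 0) xs = F 0 xs + F 0 xs" using assms unfolding modadd_def by blast
  then show ?thesis by simp
qed

lemma T_sums_unique:
  assumes "T_sums f s" and "T_sums f s'"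
  shows "s = s'"
proof
  fix \<nu>
  obtain K where K: "\<forall>N\<ge>K. \<forall>\<mu>\<le>\<nu>. (\<Sum>k<N. f k \<mu>) = s \<mu>"
    using assms(1) unfolding T_sums_def by blast
  obtain K' where K': "\<forall>N\<ge>K'. \<forall>\<mu>\<le>\<nu>. (\<Sum>k<N. f k \<mu>) = s' \<mu>"
    using assms(2) unfolding T_sums_def by blast
  have "s \<nu> = (\<Sum>k<max K K'. f k \<nu>)" using K by simp
  also have "\<dots> = s' \<nu>" using K' by simp
  finally show "s \<nu> = s' \<nu>" .
qed

lemma T_sums_finite_support:
  fixes L :: "real \<Rightarrow> nat"
  assumes "mono L" and vanish: "\<And>\<nu> k. L \<nu> < k \<Longrightarrow> f k \<nu> = 0"
  shows "T_sums f (\<lambda>\<nu>. \<Sum>k\<le>L \<nu>. f k \<nu>)"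
  unfolding T_sums_def
proof (intro allI exI[of _ "Suc (L c)" for c] impI)
  fix c K \<nu> assume "Suc (L c) \<le> K" and "\<nu> \<le> c"
  then have "L \<nu> < K" using monoD[OF \<open>mono L\<close>, of \<nu> c] by simp
  then show "(\<Sum>k<K. f k \<nu>) = (\<Sum>k\<le>L \<nu>. f k \<nu>)"
    by (intro sum.mono_neutral_right) (auto simp: vanish)
qed

lemma T_sums_zero_iff:
  fixes L :: "real \<Rightarrow> nat"
  assumes "mono L" and "\<And>\<nu> k. L \<nu> < k \<Longrightarrow> f k \<nu> = 0"
  shows "T_sums f 0 \<longleftrightarrow> (\<forall>\<nu>. (\<Sum>k\<le>L \<nu>. f k \<nu>) = 0)"
proof
  assume "T_sums f 0"
  then have "(\<lambda>\<nu>. \<Sum>k\<le>L \<nu>. f k \<nu>) = 0"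
    using T_sums_unique T_sums_finite_support[of L f, OF assms] by blast
  then show "\<forall>\<nu>. (\<Sum>k\<le>L \<nu>. f k \<nu>) = 0" by (simp add: fun_eq_iff)
next
  assume "\<forall>\<nu>. (\<Sum>k\<le>L \<nu>. f k \<nu>) = 0"
  then have "(\<lambda>\<nu>. \<Sum>k\<le>L \<nu>. f k \<nu>) = 0" by (simp add: fun_eq_iff)
  then show "T_sums f 0" using T_sums_finite_support[of L f, OF assms] by simp
qed

section \<open>Coefficients of gapped elements and of the extended operations\<close>

lemma zero_in_nov: "0 \<in> nov"
  by (simp add: nov_def)

lemma nov_nonneg: "f \<in> nov \<Longrightarrow> f \<mu> \<noteq> 0 \<Longrightarrow> 0 \<le> \<mu>"
  unfolding nov_def by (cases "\<mu> < 0") auto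

lemma nov_shift:
  assumes "f \<in> nov" and "\<And>\<nu>. \<nu> < 0 \<Longrightarrow> f (\<nu> + s) = 0"
  shows "(\<lambda>\<nu>. f (\<nu> + s)) \<in> nov"
  unfolding nov_def
proof (intro CollectI conjI allI impI)
  fix c
  have "{\<nu>. \<nu> \<le> c \<and> f (\<nu> + s) \<noteq> 0} = (\<lambda>\<mu>. \<mu> - s) ` {\<mu>. \<mu> \<le> c + s \<and> f \<mu> \<noteq> 0}"
    by (auto simp: image_iff intro!: exI[of _ "_ + s"])
  moreover have "finite {\<mu>. \<mu> \<le> c + s \<and> f \<mu> \<noteq> 0}" using assms(1) unfolding nov_def by blast
  ultimately show "finite {\<nu>. \<nu> \<le> c \<and> f (\<nu> + s) \<noteq> 0}" by simp
qed (use assms(2) in simp)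

definition supports :: "(real \<Rightarrow> 'a::zero) list \<Rightarrow> real list \<Rightarrow> bool" where
  "supports xs ms \<longleftrightarrow> length ms = length xs \<and> (\<forall>i<length xs. (xs ! i) (ms ! i) \<noteq> 0)"

lemma supports_nonneg:
  assumes "set xs \<subseteq> nov" and "supports xs ms" and "x \<in> set ms"
  shows "0 \<le> x"
proof -
  obtain i where "i < length xs" and "x = ms ! i"
    using assms(2,3) unfolding supports_def by (metis in_set_conv_nth)
  then show ?thesis using assms(1,2) nov_nonneg unfolding supports_def by (metis nth_mem subsetD)
qed

lemma supports_sum_nonneg: "set xs \<subseteq> nov \<Longrightarrow> supports xs ms \<Longrightarrow> 0 \<le> sum_list ms"
  by (rule sum_list_nonneg) (rule supports_nonneg)

lemma sum_nth_le_sum_list: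
  fixes ms :: "real list"
  assumes "\<And>x. x \<in> set ms \<Longrightarrow> 0 \<le> x" and "I \<subseteq> {..<length ms}"
  shows "sum (nth ms) I \<le> sum_list ms"
proof -
  have "sum (nth ms) I \<le> sum (nth ms) {..<length ms}"
    using assms by (intro sum_mono2) auto
  also have "\<dots> = sum_list ms" by (simp add: sum_list_sum_nth atLeast0LessThan)
  finally show ?thesis .
qed

locale discrete_monoid =
  fixes G :: "real set"
  assumes discrete: "discrete_submonoid G"
begin

lemma zero_in_G: "0 \<in> G"
  using discrete by (simp add: discrete_submonoid_def)

lemma G_nonneg: "x \<in> G \<Longrightarrow> 0 \<le> x"
  using discrete by (auto simp: discrete_submonoid_def)

lemma G_add: "x \<in> G \<Longrightarrow> y \<in> G \<Longrightarrow> x + y \<in> G"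
  using discrete by (simp add: discrete_submonoid_def)

lemma finite_G_atMost: "finite (G \<inter> {..c})"
  using discrete by (simp add: discrete_submonoid_def)

lemma sum_list_in_G: "set ms \<subseteq> G \<Longrightarrow> sum_list ms \<in> G"
  by (induction ms) (auto simp: zero_in_G G_add)

lemma gap_exists: "\<exists>g>0. \<forall>\<mu>\<in>G. 0 < \<mu> \<longrightarrow> g \<le> \<mu>"
proof (cases "G \<inter> {0<..1} = {}")
  case True
  then show ?thesis by (intro exI[of _ 1]) (auto simp: not_le)
next
  case False
  let ?P = "G \<inter> {0<..1}"
  have "finite ?P" by (rule finite_subset[OF _ finite_G_atMost[of 1]]) auto
  then have "Min ?P \<in> ?P" and "\<And>\<mu>. \<mu> \<in> ?P \<Longrightarrow> Min ?P \<le> \<mu>"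
    using False by (rule Min_in, simp)
  moreover have "Min ?P \<le> \<mu>" if "\<mu> \<in> G" and "0 < \<mu>" for \<mu>
    using calculation that by (cases "\<mu> \<le> 1") force+
  ultimately show ?thesis by (intro exI[of _ "Min ?P"]) auto
qed

definition gap :: real where
  "gap = (SOME g. 0 < g \<and> (\<forall>\<mu>\<in>G. 0 < \<mu> \<longrightarrow> g \<le> \<mu>))"

lemma gap_pos: "0 < gap" and gap_le: "\<mu> \<in> G \<Longrightarrow> 0 < \<mu> \<Longrightarrow> gap \<le> \<mu>"
  using someI_ex[OF gap_exists] unfolding gap_def by auto

definition max_terms :: "real \<Rightarrow> nat" where
  "max_terms c = nat \<lceil>c / gap\<rceil>"

lemma mono_max_terms: "mono max_terms"
  unfolding max_terms_def using gap_pos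
  by (intro monoI nat_mono ceiling_mono divide_right_mono) auto

lemma max_terms_zero: "max_terms 0 = 0"
  by (simp add: max_terms_def)

lemma max_terms_pos: "\<nu> \<in> G \<Longrightarrow> 0 < \<nu> \<Longrightarrow> 0 < max_terms \<nu>"
  using gap_le[of \<nu>] gap_pos unfolding max_terms_def by (simp add: field_simps)

lemma card_le_max_terms:
  assumes "finite I" and "\<And>i. i \<in> I \<Longrightarrow> f i \<in> G \<and> 0 < f i" and "sum f I \<le> c"
  shows "card I \<le> max_terms c"
proof -
  have "real (card I) * gap \<le> sum f I"
    using sum_bounded_below[of I gap f] assms(2) gap_le by auto
  then have "real (card I) \<le> c / gap" using assms(3) gap_pos by (simp add: field_simps)
  then show ?thesis unfolding max_terms_def by linarith
qed

lemma gapped_nov: "gapped G f \<Longrightarrow> f \<in> nov"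
  unfolding nov_def gapped_def
proof (intro CollectI conjI allI impI)
  fix c assume "\<forall>\<nu>. f \<nu> \<noteq> 0 \<longrightarrow> \<nu> \<in> G"
  then show "finite {\<nu>. \<nu> \<le> c \<and> f \<nu> \<noteq> 0}"
    by (intro finite_subset[OF _ finite_G_atMost[of c]]) auto
qed (use G_nonneg in force)

lemma gapped_list_nov: "\<forall>x\<in>set xs. gapped G x \<Longrightarrow> set xs \<subseteq> nov"
  using gapped_nov by blast

lemma gapped_add: "gapped G f \<Longrightarrow> gapped G g \<Longrightarrow> gapped G (f + g :: real \<Rightarrow> 'a::monoid_add)"
  unfolding gapped_def by (metis add.left_neutral add.right_neutral plus_fun_apply)

lemma gapped_diff: "gapped G f \<Longrightarrow> gapped G g \<Longrightarrow> gapped G (f - g :: real \<Rightarrow> 'a::group_add)"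
  unfolding gapped_def by (metis diff_self diff_zero minus_apply)

lemma gapped_sum:
  "(\<And>a. a \<in> A \<Longrightarrow> gapped G (f a)) \<Longrightarrow> gapped G (sum f A :: real \<Rightarrow> 'a::comm_monoid_add)"
proof (induction A rule: infinite_finite_induct)
  case (insert a A)
  have "gapped G (f a + sum f A)" using insert.IH insert.prems by (intro gapped_add) auto
  then show ?case by (simp only: sum.insert[OF insert.hyps])
qed (simp_all add: gapped_def)

lemma gapped_least_nonzero:
  assumes "gapped G f" and "f \<noteq> 0"
  obtains \<nu> where "\<nu> \<in> G" and "f \<nu> \<noteq> 0" and "\<And>\<mu>. \<mu> < \<nu> \<Longrightarrow> f \<mu> = 0"
proof -
  obtain \<mu>1 where "f \<mu>1 \<noteq> 0" using assms(2) by (auto simp: fun_eq_iff)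
  define Z where "Z = {\<mu>. f \<mu> \<noteq> 0} \<inter> {..\<mu>1}"
  have "Z \<subseteq> G \<inter> {..\<mu>1}" using assms(1) unfolding Z_def gapped_def by auto
  then have "finite Z" using finite_G_atMost finite_subset by blast
  moreover have "\<mu>1 \<in> Z" using \<open>f \<mu>1 \<noteq> 0\<close> unfolding Z_def by simp
  ultimately have "Min Z \<in> Z" and "\<And>\<mu>. \<mu> \<in> Z \<Longrightarrow> Min Z \<le> \<mu>" by (auto intro: Min_in)
  then show ?thesis using that \<open>Z \<subseteq> G \<inter> {..\<mu>1}\<close> unfolding Z_def by force
qed

lemma wf_less_in_G: "wf {(\<mu>, \<nu>). \<mu> \<in> G \<and> \<mu> < \<nu>}"
proof (rule wf_subset[OF wf_measure[of "\<lambda>x. card (G \<inter> {..<x})"]], safe)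
  fix \<mu> \<nu> :: real assume "\<mu> \<in> G" and "\<mu> < \<nu>"
  then have "G \<inter> {..<\<mu>} \<subset> G \<inter> {..<\<nu>}" by auto
  moreover have "finite (G \<inter> {..<\<nu>})" by (rule finite_subset[OF _ finite_G_atMost[of \<nu>]]) auto
  ultimately show "(\<mu>, \<nu>) \<in> measure (\<lambda>x. card (G \<inter> {..<x}))" by (simp add: psubset_card_mono)
qed

definition series_coeff :: "(nat \<Rightarrow> real \<Rightarrow> 'a::comm_monoid_add) \<Rightarrow> real \<Rightarrow> 'a" where
  "series_coeff f \<nu> = (\<Sum>k\<le>max_terms \<nu>. f k \<nu>)"

lemma T_sums_zero_iff_series_coeff:
  "(\<And>\<nu> k. max_terms \<nu> < k \<Longrightarrow> f k \<nu> = 0) \<Longrightarrow> T_sums f 0 \<longleftrightarrow> series_coeff f = 0"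
  using T_sums_zero_iff[OF mono_max_terms, of f] unfolding series_coeff_def by (simp add: fun_eq_iff)

lemma gapped_series_coeff: "(\<And>k. gapped G (f k)) \<Longrightarrow> gapped G (series_coeff f)"
  unfolding gapped_def series_coeff_def by (meson sum.not_neutral_contains_not_neutral)

lemma series_coeff_eq_partial_sum:
  assumes "\<And>k. max_terms \<nu> < k \<Longrightarrow> f k \<nu> = 0" and "max_terms \<nu> \<le> B"
  shows "(\<Sum>k\<le>B. f k \<nu>) = series_coeff f \<nu>"
  unfolding series_coeff_def using assms by (intro sum.mono_neutral_right) auto

definition pos_gapped :: "(real \<Rightarrow> 'a::zero) \<Rightarrow> bool" where
  "pos_gapped b \<longleftrightarrow> gapped G b \<and> b 0 = 0"

lemma pos_gapped_nov: "pos_gapped b \<Longrightarrow> b \<in> nov"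
  unfolding pos_gapped_def using gapped_nov by blast

definition truncate_below :: "(real \<Rightarrow> 'a::zero) \<Rightarrow> real \<Rightarrow> real \<Rightarrow> 'a" where
  "truncate_below f \<nu> = (\<lambda>\<mu>. if \<mu> \<in> G \<and> 0 < \<mu> \<and> \<mu> < \<nu> then f \<mu> else 0)"

lemma pos_gapped_truncate_below: "pos_gapped (truncate_below f \<nu>)"
  unfolding pos_gapped_def gapped_def truncate_below_def by auto

lemma supports_in_G:
  assumes "\<forall>x\<in>set xs. gapped G x" and "supports xs ms"
  shows "set ms \<subseteq> G"
proof
  fix x assume "x \<in> set ms"
  then obtain i where "i < length xs" and "x = ms ! i"
    using assms(2) unfolding supports_def by (metis in_set_conv_nth)
  then show "x \<in> G" using assms unfolding supports_def gapped_def by (meson nth_mem)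
qed

lemma supports_card_le:
  assumes xs: "set xs \<subseteq> nov" and ms: "supports xs ms" and I: "I \<subseteq> {..<length xs}"
    and Ib: "\<And>i. i \<in> I \<Longrightarrow> xs ! i = b" and b: "pos_gapped b" and c: "sum_list ms \<le> c"
  shows "card I \<le> max_terms c"
proof (rule card_le_max_terms)
  show "finite I" using I finite_subset by blast
  show "ms ! i \<in> G \<and> 0 < ms ! i" if "i \<in> I" for i
  proof -
    have "b (ms ! i) \<noteq> 0" using ms I Ib that unfolding supports_def by force
    moreover have "0 \<le> ms ! i" using supports_nonneg[OF xs ms] ms I that unfolding supports_def by auto
    moreover have "ms ! i \<noteq> 0" using calculation(1) b unfolding pos_gapped_def by auto
    ultimately show ?thesis using b unfolding pos_gapped_def gapped_def by auto
  qed
  have "sum (nth ms) I \<le> sum_list ms"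
    using supports_nonneg[OF xs ms] ms I unfolding supports_def by (intro sum_nth_le_sum_list) auto
  then show "sum (nth ms) I \<le> c" using c by simp
qed

lemma ext_mod_nonzero:
  assumes "ext_mod G n y xs \<nu> \<noteq> 0"
  obtains l \<mu> ms where "l \<in> G" and "y \<mu> \<noteq> 0" and "supports xs ms" and "l + \<mu> + sum_list ms = \<nu>"
  using sum.not_neutral_contains_not_neutral[OF assms[unfolded ext_mod_def]] that
  unfolding supports_def by blast

lemma ext_alg_nonzero:
  assumes "ext_alg G m xs \<nu> \<noteq> 0"
  obtains l ms where "l \<in> G" and "supports xs ms" and "l + sum_list ms = \<nu>"
  using sum.not_neutral_contains_not_neutral[OF assms[unfolded ext_alg_def]] that
  unfolding supports_def by blast

lemma ext_mod_gapped:
  assumes "gapped G y" and "\<forall>x\<in>set xs. gapped G x"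
  shows "gapped G (ext_mod G n y xs)"
  unfolding gapped_def
proof (intro allI impI)
  fix \<nu> assume "ext_mod G n y xs \<nu> \<noteq> 0"
  then obtain l \<mu> ms where "l \<in> G" "y \<mu> \<noteq> 0" "supports xs ms" "l + \<mu> + sum_list ms = \<nu>"
    by (rule ext_mod_nonzero)
  then show "\<nu> \<in> G"
    using assms supports_in_G sum_list_in_G G_add unfolding gapped_def by metis
qed

lemma ext_alg_gapped:
  assumes "\<forall>x\<in>set xs. gapped G x"
  shows "gapped G (ext_alg G m xs)"
  unfolding gapped_def
proof (intro allI impI)
  fix \<nu> assume "ext_alg G m xs \<nu> \<noteq> 0"
  then obtain l ms where "l \<in> G" "supports xs ms" "l + sum_list ms = \<nu>"
    by (rule ext_alg_nonzero)
  then show "\<nu> \<in> G" using assms supports_in_G sum_list_in_G G_add by metis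
qed

lemma ext_mod_vanish:
  assumes y: "y \<in> nov" and xs: "set xs \<subseteq> nov" and I: "I \<subseteq> {..<length xs}"
    and Ib: "\<And>i. i \<in> I \<Longrightarrow> xs ! i = b" and b: "pos_gapped b" and card: "max_terms \<nu> < card I"
  shows "ext_mod G n y xs \<nu> = 0"
proof (rule ccontr)
  assume "ext_mod G n y xs \<nu> \<noteq> 0"
  then obtain l \<mu> ms where "l \<in> G" "y \<mu> \<noteq> 0" and ms: "supports xs ms" and "l + \<mu> + sum_list ms = \<nu>"
    by (rule ext_mod_nonzero)
  then have "sum_list ms \<le> \<nu>" using G_nonneg nov_nonneg[OF y] by force
  then have "card I \<le> max_terms \<nu>" using supports_card_le[OF xs ms I Ib b] by blast
  then show False using card by simp
qed

lemma ext_mod_replicate_vanish: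
  "y \<in> nov \<Longrightarrow> pos_gapped b \<Longrightarrow> max_terms \<nu> < k \<Longrightarrow> ext_mod G n y (replicate k b) \<nu> = 0"
  by (rule ext_mod_vanish[where I = "{..<k}"]) (auto dest: pos_gapped_nov)

lemma ext_alg_replicate_vanish:
  assumes b: "pos_gapped b" and k: "max_terms \<nu> < k"
  shows "ext_alg G m (replicate k b) \<nu> = 0"
proof (rule ccontr)
  have xs: "set (replicate k b) \<subseteq> nov" using pos_gapped_nov[OF b] by auto
  assume "ext_alg G m (replicate k b) \<nu> \<noteq> 0"
  then obtain l ms where "l \<in> G" and ms: "supports (replicate k b) ms" and "l + sum_list ms = \<nu>"
    by (rule ext_alg_nonzero)
  then have "sum_list ms \<le> \<nu>" using G_nonneg by force
  then have "card {..<k} \<le> max_terms \<nu>" using supports_card_le[OF xs ms _ _ b, of "{..<k}"] by simp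
  then show False using k by simp
qed

lemma ext_mod_vanish_low_y:
  assumes xs: "set xs \<subseteq> nov" and y: "\<forall>\<mu>\<le>\<nu>. y \<mu> = 0"
  shows "ext_mod G n y xs \<nu> = 0"
proof (rule ccontr)
  assume "ext_mod G n y xs \<nu> \<noteq> 0"
  then obtain l \<mu> ms where "l \<in> G" "y \<mu> \<noteq> 0" "supports xs ms" "l + \<mu> + sum_list ms = \<nu>"
    by (rule ext_mod_nonzero)
  then show False using y G_nonneg supports_sum_nonneg[OF xs] by force
qed

lemma ext_mod_vanish_low_entry:
  assumes y: "y \<in> nov" and xs: "set xs \<subseteq> nov" and i: "i < length xs"
    and x: "\<forall>\<mu>\<le>\<nu>. (xs ! i) \<mu> = 0"
  shows "ext_mod G n y xs \<nu> = 0"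
proof (rule ccontr)
  assume "ext_mod G n y xs \<nu> \<noteq> 0"
  then obtain l \<mu> ms where "l \<in> G" "y \<mu> \<noteq> 0" and ms: "supports xs ms" and "l + \<mu> + sum_list ms = \<nu>"
    by (rule ext_mod_nonzero)
  moreover have "ms ! i \<le> sum_list ms"
    using supports_nonneg[OF xs ms] ms i unfolding supports_def
    by (intro member_le_sum_list) auto
  ultimately have "ms ! i \<le> \<nu>" using G_nonneg nov_nonneg[OF y] by force
  then show False using x ms i unfolding supports_def by auto
qed

lemma ext_mod_zero_entry:
  assumes "y \<in> nov" and "set xs \<subseteq> nov" and "i < length xs"
  shows "ext_mod G n y (xs[i := 0]) \<nu> = 0"
  using assms set_update_subset_insert[of xs i 0] zero_in_nov
  by (intro ext_mod_vanish_low_entry[of _ _ i]) auto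

definition mod_terms :: "(real \<Rightarrow> 'd::zero) \<Rightarrow> (real \<Rightarrow> 'c::zero) list \<Rightarrow> real \<Rightarrow> (real \<times> real \<times> real list) set" where
  "mod_terms y xs \<nu> = {(l, \<mu>, ms). l \<in> G \<and> y \<mu> \<noteq> 0 \<and> supports xs ms \<and> l + \<mu> + sum_list ms = \<nu>}"

lemma ext_mod_eq_sum_mod_terms:
  "ext_mod G n y xs \<nu> = (\<Sum>(l, \<mu>, ms)\<in>mod_terms y xs \<nu>. n (length xs) l (y \<mu>) (map (\<lambda>(x, \<mu>). x \<mu>) (zip xs ms)))"
  unfolding ext_mod_def mod_terms_def supports_def by simp

lemma mod_terms_single:
  "mod_terms y [x] \<nu> = {(l, \<mu>, [m]) | l \<mu> m. l \<in> G \<and> y \<mu> \<noteq> 0 \<and> x m \<noteq> 0 \<and> l + \<mu> + m = \<nu>}"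
  unfolding mod_terms_def supports_def by (auto simp: length_Suc_conv)

lemma ext_mod_shift: "ext_mod G n y [\<lambda>\<mu>. x (\<mu> - g)] \<nu> = ext_mod G n y [x] (\<nu> - g)"
  unfolding ext_mod_eq_sum_mod_terms mod_terms_single
  by (rule sum.reindex_bij_witness[where i = "\<lambda>(l, \<mu>, ms). (l, \<mu>, map (\<lambda>m. m + g) ms)"
        and j = "\<lambda>(l, \<mu>, ms). (l, \<mu>, map (\<lambda>m. m - g) ms)"]) auto

definition terms :: "real set \<Rightarrow> nat \<Rightarrow> real \<Rightarrow> (real \<times> real \<times> real list) set" where
  "terms S k \<nu> = {(l, \<mu>, ms). l \<in> G \<and> \<mu> \<in> S \<and> length ms = k \<and> set ms \<subseteq> S \<and> l + \<mu> + sum_list ms = \<nu>}"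

lemma finite_terms:
  assumes "finite S"
  shows "finite (terms S k \<nu>)"
proof (rule finite_subset)
  show "terms S k \<nu> \<subseteq> (\<lambda>(\<mu>, ms). (\<nu> - \<mu> - sum_list ms, \<mu>, ms)) ` (S \<times> {ms. set ms \<subseteq> S \<and> length ms = k})"
    unfolding terms_def by (force simp: image_iff)
  show "finite ((\<lambda>(\<mu>, ms). (\<nu> - \<mu> - sum_list ms, \<mu>, ms)) ` (S \<times> {ms. set ms \<subseteq> S \<and> length ms = k}))"
    using assms finite_lists_length_eq[OF assms] by blast
qed

lemma mod_terms_subset_terms:
  assumes y: "y \<in> nov" and xs: "set xs \<subseteq> nov"
    and Sy: "\<And>\<mu>. \<mu> \<le> \<nu> \<Longrightarrow> y \<mu> \<noteq> 0 \<Longrightarrow> \<mu> \<in> S"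
    and Sxs: "\<And>x \<mu>. x \<in> set xs \<Longrightarrow> \<mu> \<le> \<nu> \<Longrightarrow> x \<mu> \<noteq> 0 \<Longrightarrow> \<mu> \<in> S"
  shows "mod_terms y xs \<nu> \<subseteq> terms S (length xs) \<nu>"
proof safe
  fix l \<mu> ms assume "(l, \<mu>, ms) \<in> mod_terms y xs \<nu>"
  then have l: "l \<in> G" and y\<mu>: "y \<mu> \<noteq> 0" and ms: "supports xs ms" and sum: "l + \<mu> + sum_list ms = \<nu>"
    unfolding mod_terms_def by auto
  have "0 \<le> l" "0 \<le> \<mu>" "0 \<le> sum_list ms"
    using G_nonneg[OF l] nov_nonneg[OF y y\<mu>] supports_sum_nonneg[OF xs ms] .
  then have "\<mu> \<in> S" using Sy y\<mu> sum by force
  moreover have "set ms \<subseteq> S"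
  proof
    fix x assume "x \<in> set ms"
    then obtain i where i: "i < length xs" and x: "x = ms ! i"
      using ms unfolding supports_def by (metis in_set_conv_nth)
    have "x \<le> sum_list ms"
      using x i ms supports_nonneg[OF xs ms] unfolding supports_def by (metis member_le_sum_list nth_mem)
    then show "x \<in> S"
      using Sxs[of "xs ! i" x] i x ms \<open>0 \<le> l\<close> \<open>0 \<le> \<mu>\<close> sum unfolding supports_def by force
  qed
  ultimately show "(l, \<mu>, ms) \<in> terms S (length xs) \<nu>"
    using l ms sum unfolding terms_def supports_def by auto
qed

lemma top_term_cases:
  assumes p: "(l, \<mu>, ms) \<in> terms (G \<inter> {..\<nu>}) k \<nu>" and i: "i < k" and top: "ms ! i = \<nu>"
  shows "(k = 1 \<and> l = 0 \<and> \<mu> = 0 \<and> ms = [\<nu>]) \<or> (\<exists>i'<k. i' \<noteq> i \<and> ms ! i' = 0)"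
proof -
  have l: "0 \<le> l" and \<mu>: "0 \<le> \<mu>" and len: "length ms = k" and nonneg: "\<And>x. x \<in> set ms \<Longrightarrow> 0 \<le> x"
    and sum: "l + \<mu> + sum_list ms = \<nu>"
    using p G_nonneg unfolding terms_def by auto
  show ?thesis
  proof (cases "k = 1")
    case True
    then obtain x where "ms = [x]" using len by (metis One_nat_def length_0_conv length_Suc_conv)
    then show ?thesis using True i top l \<mu> sum by simp
  next
    case False
    define i' where "i' = (if i = 0 then 1 else (0::nat))"
    have i': "i' < k" "i' \<noteq> i" using i False unfolding i'_def by auto
    have "sum (nth ms) {i, i'} \<le> sum_list ms"
      using nonneg i i' len by (intro sum_nth_le_sum_list) auto
    moreover have "0 \<le> ms ! i'" using nonneg i' len by auto
    ultimately have "ms ! i' = 0" using i'(2) top l \<mu> sum by simp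
    then show ?thesis using i' by blast
  qed
qed

end

section \<open>Multilinearity and the leading map\<close>

locale cyclic_module = discrete_monoid G
  for G :: "real set" +
  fixes m :: "nat \<Rightarrow> real \<Rightarrow> 'c::ab_group_add list \<Rightarrow> 'c"
    and n :: "nat \<Rightarrow> real \<Rightarrow> 'd::ab_group_add \<Rightarrow> 'c list \<Rightarrow> 'd"
    and one :: "real \<Rightarrow> 'd"
  assumes module: "ainf_mod G m n"
    and cyclic: "cyclic_elem G n one"
    and one_gapped: "gapped G one"
begin

lemma n_modadd: "modadd (n k l)"
  using module by (simp add: ainf_mod_def)

lemma n_zero_left: "n k l 0 zs = 0"
  by (rule modadd_zero[OF n_modadd])

lemma n_zero_entry: "i < length zs \<Longrightarrow> zs ! i = 0 \<Longrightarrow> n k l y zs = 0"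
  using n_modadd[of k l] unfolding modadd_def by (blast intro: multiadd_zero)

lemma n_add_left: "n k l (y + y') zs = n k l y zs + n k l y' zs"
  using n_modadd[of k l] unfolding modadd_def by blast

lemma n_add_entry:
  "i < length zs \<Longrightarrow> n k l y (zs[i := a + b]) = n k l y (zs[i := a]) + n k l y (zs[i := b])"
  using n_modadd[of k l] unfolding modadd_def multiadd_def by blast

lemma one_nov: "one \<in> nov"
  using cyclic by (simp add: cyclic_elem_def)

lemma ext_mod_eq_sum_terms:
  assumes y: "y \<in> nov" and xs: "set xs \<subseteq> nov" and S: "finite S"
    and Sy: "\<And>\<mu>. \<mu> \<le> \<nu> \<Longrightarrow> y \<mu> \<noteq> 0 \<Longrightarrow> \<mu> \<in> S"
    and Sxs: "\<And>x \<mu>. x \<in> set xs \<Longrightarrow> \<mu> \<le> \<nu> \<Longrightarrow> x \<mu> \<noteq> 0 \<Longrightarrow> \<mu> \<in> S"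
  shows "ext_mod G n y xs \<nu> =
    (\<Sum>(l, \<mu>, ms)\<in>terms S (length xs) \<nu>. n (length xs) l (y \<mu>) (map (\<lambda>(x, \<mu>). x \<mu>) (zip xs ms)))"
  unfolding ext_mod_eq_sum_mod_terms
proof (rule sum.mono_neutral_left[OF finite_terms[OF S] mod_terms_subset_terms[OF y xs Sy Sxs]])
  show "\<forall>p\<in>terms S (length xs) \<nu> - mod_terms y xs \<nu>.
      (case p of (l, \<mu>, ms) \<Rightarrow> n (length xs) l (y \<mu>) (map (\<lambda>(x, \<mu>). x \<mu>) (zip xs ms))) = 0"
  proof (clarify)
    fix l \<mu> ms assume "(l, \<mu>, ms) \<in> terms S (length xs) \<nu>" and "(l, \<mu>, ms) \<notin> mod_terms y xs \<nu>"
    then have len: "length ms = length xs" and "y \<mu> = 0 \<or> (\<exists>i<length xs. (xs ! i) (ms ! i) = 0)"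
      unfolding terms_def mod_terms_def supports_def by auto
    then show "n (length xs) l (y \<mu>) (map (\<lambda>(x, \<mu>). x \<mu>) (zip xs ms)) = 0"
      by (auto simp: n_zero_left intro: n_zero_entry)
  qed
qed

lemma ext_mod_eq_sum_gapped_terms:
  assumes "gapped G y" and "\<forall>x\<in>set xs. gapped G x"
  shows "ext_mod G n y xs \<nu> =
    (\<Sum>(l, \<mu>, ms)\<in>terms (G \<inter> {..\<nu>}) (length xs) \<nu>. n (length xs) l (y \<mu>) (map (\<lambda>(x, \<mu>). x \<mu>) (zip xs ms)))"
  using assms finite_G_atMost
  by (intro ext_mod_eq_sum_terms gapped_nov gapped_list_nov) (auto simp: gapped_def)

lemma ext_mod_add_left:
  assumes "gapped G y" and "gapped G y'" and "\<forall>x\<in>set xs. gapped G x"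
  shows "ext_mod G n (y + y') xs \<nu> = ext_mod G n y xs \<nu> + ext_mod G n y' xs \<nu>"
  unfolding ext_mod_eq_sum_gapped_terms[OF gapped_add[OF assms(1,2)] assms(3)]
    ext_mod_eq_sum_gapped_terms[OF assms(1,3)] ext_mod_eq_sum_gapped_terms[OF assms(2,3)]
    sum.distrib[symmetric]
  by (rule sum.cong) (auto simp: n_add_left)

lemma ext_mod_sum_left:
  assumes "\<And>a. a \<in> A \<Longrightarrow> gapped G (E a)" and xs: "\<forall>x\<in>set xs. gapped G x"
  shows "ext_mod G n (\<Sum>a\<in>A. E a) xs \<nu> = (\<Sum>a\<in>A. ext_mod G n (E a) xs \<nu>)"
  using assms(1)
proof (induction A rule: infinite_finite_induct)
  case (insert a A)
  have IH: "ext_mod G n (sum E A) xs \<nu> = (\<Sum>a\<in>A. ext_mod G n (E a) xs \<nu>)"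
    using insert.IH insert.prems by blast
  show ?case
    unfolding sum.insert[OF insert.hyps] IH[symmetric]
    by (rule ext_mod_add_left) (use insert.prems xs in \<open>auto intro: gapped_sum\<close>)
qed (simp_all add: ext_mod_vanish_low_y[OF gapped_list_nov[OF xs]])

lemma ext_mod_add_entry:
  assumes y: "gapped G y" and xs: "\<forall>x\<in>set xs. gapped G x" and i: "i < length xs"
    and u: "gapped G u" and w: "gapped G w"
  shows "ext_mod G n y (xs[i := u + w]) \<nu> = ext_mod G n y (xs[i := u]) \<nu> + ext_mod G n y (xs[i := w]) \<nu>"
proof -
  have upd: "\<forall>x\<in>set (xs[i := v]). gapped G x" if "gapped G v" for v
    using xs that set_update_subset_insert[of xs i v] by blast
  show ?thesis
    unfolding ext_mod_eq_sum_gapped_terms[OF y upd[OF gapped_add[OF u w]]]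
      ext_mod_eq_sum_gapped_terms[OF y upd[OF u]] ext_mod_eq_sum_gapped_terms[OF y upd[OF w]]
      sum.distrib[symmetric] length_list_update
    by (rule sum.cong) (auto simp: terms_def map_zip_update i n_add_entry)
qed

lemma ext_mod_sum_entry:
  assumes y: "gapped G y" and xs: "\<forall>x\<in>set xs. gapped G x" and i: "i < length xs"
    and "\<And>a. a \<in> A \<Longrightarrow> gapped G (E a)"
  shows "ext_mod G n y (xs[i := \<Sum>a\<in>A. E a]) \<nu> = (\<Sum>a\<in>A. ext_mod G n y (xs[i := E a]) \<nu>)"
  using assms(4)
proof (induction A rule: infinite_finite_induct)
  case (insert a A)
  have IH: "ext_mod G n y (xs[i := sum E A]) \<nu> = (\<Sum>a\<in>A. ext_mod G n y (xs[i := E a]) \<nu>)"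
    using insert.IH insert.prems by blast
  show ?case
    unfolding sum.insert[OF insert.hyps] IH[symmetric]
    by (rule ext_mod_add_entry[OF y xs i]) (use insert.prems in \<open>auto intro: gapped_sum\<close>)
qed (simp_all add: ext_mod_zero_entry[OF gapped_nov[OF y] gapped_list_nov[OF xs] i])

lemma ext_mod_entry_local:
  assumes y: "gapped G y" and xs: "\<forall>x\<in>set xs. gapped G x" and i: "i < length xs"
    and u: "gapped G u" and w: "gapped G w" and uw: "\<forall>\<mu>\<le>\<nu>. u \<mu> = w \<mu>"
  shows "ext_mod G n y (xs[i := u]) \<nu> = ext_mod G n y (xs[i := w]) \<nu>"
proof -
  have "ext_mod G n y (xs[i := w + (u - w)]) \<nu> = ext_mod G n y (xs[i := w]) \<nu> + ext_mod G n y (xs[i := u - w]) \<nu>"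
    by (rule ext_mod_add_entry[OF y xs i w gapped_diff[OF u w]])
  moreover have "ext_mod G n y (xs[i := u - w]) \<nu> = 0"
    using gapped_list_nov[OF xs] set_update_subset_insert[of xs i "u - w"] gapped_nov[OF gapped_diff[OF u w]] i uw
    by (intro ext_mod_vanish_low_entry[OF gapped_nov[OF y], of _ i]) auto
  ultimately show ?thesis by simp
qed

text \<open>The reduction modulo \<open>\<Lambda>\<^sub>+\<close> of \<open>x \<mapsto> n\<^sub>1(1; x)\<close>, acting on constant coefficients.\<close>
definition lead :: "'c \<Rightarrow> 'd" where
  "lead c = n 1 0 (one 0) [c]"

lemma lead_add: "lead (a + b) = lead a + lead b"
  unfolding lead_def using n_add_entry[of 0 "[a]" 1 0 "one 0" a b] by simp

lemma lead_diff: "lead (a - b) = lead a - lead b"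
  using lead_add[of "a - b" b] by (simp add: algebra_simps)

lemma bij_betw_ext_mod_single: "bij_betw (\<lambda>x. ext_mod G n one [x]) nov nov"
  using cyclic by (simp add: cyclic_elem_def)

lemma ext_mod_single_at_zero:
  assumes "x \<in> nov"
  shows "ext_mod G n one [x] 0 = lead (x 0)"
proof -
  have "terms {0} 1 0 = {(0, 0, [0])}"
    unfolding terms_def using zero_in_G by (auto simp: length_Suc_conv)
  moreover have "ext_mod G n one [x] 0 =
      (\<Sum>(l, \<mu>, ms)\<in>terms {0} 1 0. n 1 l (one \<mu>) (map (\<lambda>(x, \<mu>). x \<mu>) (zip [x] ms)))"
    using ext_mod_eq_sum_terms[OF one_nov, of "[x]" "{0}" 0] assms nov_nonneg[of one] nov_nonneg[of x]
      one_nov by force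
  ultimately show ?thesis by (simp add: lead_def)
qed

lemma surj_lead: "surj lead"
proof -
  have "d \<in> range lead" for d :: 'd
  proof -
    define y where "y = (\<lambda>\<mu>::real. if \<mu> = 0 then d else 0)"
    have "y \<in> nov" unfolding y_def using zero_in_G by (intro gapped_nov) (simp add: gapped_def)
    then obtain x where x: "x \<in> nov" and "y = ext_mod G n one [x]"
      using bij_betw_imp_surj_on[OF bij_betw_ext_mod_single] by force
    then have "y 0 = lead (x 0)" using ext_mod_single_at_zero[OF x] by simp
    then show "d \<in> range lead" unfolding y_def by simp
  qed
  then show ?thesis by blast
qed

text \<open>If \<open>lead c = 0\<close>, then \<open>n\<^sub>1(1; c)\<close> is divisible by \<open>T\<^sup>g\<close> for the gap \<open>g\<close> of \<open>G\<close>; surjectivity writes it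
  as \<open>T\<^sup>g n\<^sub>1(1; x')\<close>, and injectivity forces \<open>c = T\<^sup>g x'\<close>, whose constant coefficient vanishes.\<close>
lemma lead_eq_zero:
  assumes "lead c = 0"
  shows "c = 0"
proof -
  define x where "x = (\<lambda>\<mu>::real. if \<mu> = 0 then c else 0)"
  have x: "x \<in> nov" unfolding x_def using zero_in_G by (intro gapped_nov) (simp add: gapped_def)
  define y where "y = ext_mod G n one [x]"
  have y_gapped: "gapped G y"
    unfolding y_def using one_gapped zero_in_G by (intro ext_mod_gapped) (auto simp: x_def gapped_def)
  have y0: "y 0 = 0" unfolding y_def using ext_mod_single_at_zero[OF x] assms by (simp add: x_def)
  have "(\<lambda>\<nu>. y (\<nu> + gap)) \<in> nov"
  proof (rule nov_shift[OF gapped_nov[OF y_gapped]])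
    fix \<nu> :: real assume "\<nu> < 0"
    show "y (\<nu> + gap) = 0"
    proof (rule ccontr)
      assume "y (\<nu> + gap) \<noteq> 0"
      then have "\<nu> + gap \<in> G" and "0 < \<nu> + gap"
        using y_gapped y0 G_nonneg unfolding gapped_def by (metis order_le_less)+
      then show False using gap_le \<open>\<nu> < 0\<close> by fastforce
    qed
  qed
  then obtain x' where x': "x' \<in> nov" and y': "ext_mod G n one [x'] = (\<lambda>\<nu>. y (\<nu> + gap))"
    using bij_betw_imp_surj_on[OF bij_betw_ext_mod_single] by (metis (no_types, lifting) imageE)
  define x'' where "x'' = (\<lambda>\<mu>. x' (\<mu> - gap))"
  have x'': "x'' \<in> nov"
    using nov_shift[OF x', of "- gap"] x' gap_pos unfolding x''_def nov_def by simp
  have "ext_mod G n one [x''] = y"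
    unfolding x''_def ext_mod_shift by (simp add: y')
  then have "x'' = x"
    using inj_onD[OF bij_betw_imp_inj_on[OF bij_betw_ext_mod_single] _ x'' x] unfolding y_def by blast
  moreover have "x'' 0 = 0" using x' gap_pos unfolding x''_def nov_def by simp
  ultimately show "c = 0" unfolding x_def by (simp add: fun_eq_iff split: if_splits)
qed

lemma bij_lead: "bij lead"
proof (rule bijI[OF injI surj_lead])
  fix a b assume "lead a = lead b"
  then show "a = b" using lead_eq_zero[of "a - b"] by (simp add: lead_diff)
qed

section \<open>Solving \<open>d\<^sup>b(1) = 0\<close> coefficientwise\<close>

lemma sum_terms_delta:
  "(\<Sum>p\<in>terms (G \<inter> {..\<nu>}) k \<nu>. if P \<and> p = (0, 0, [\<nu>]) then d else 0) = (if P \<and> k = 1 then d else 0)"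
  if "\<nu> \<in> G"
proof (cases "P \<and> k = 1")
  case True
  then have "(0, 0, [\<nu>]) \<in> terms (G \<inter> {..\<nu>}) k \<nu>"
    using that zero_in_G G_nonneg[OF that] unfolding terms_def by auto
  then show ?thesis using True finite_terms[OF finite_G_atMost] by (simp add: sum.delta')
next
  case False
  moreover have "(0, 0, [\<nu>]) \<notin> terms (G \<inter> {..\<nu>}) k \<nu>" if "k \<noteq> 1"
    using that unfolding terms_def by auto
  ultimately show ?thesis by (auto intro: sum.neutral)
qed

lemma ext_mod_replicate_perturb:
  assumes b: "pos_gapped b" and t: "pos_gapped t" and \<nu>: "\<nu> \<in> G"
    and below: "\<forall>\<mu><\<nu>. t \<mu> = b \<mu>" and t\<nu>: "t \<nu> = 0"
  shows "ext_mod G n one (replicate k b) \<nu> = ext_mod G n one (replicate k t) \<nu> + (if k = 1 then lead (b \<nu>) else 0)"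
proof -
  let ?T = "terms (G \<inter> {..\<nu>}) k \<nu>"
  have rep: "ext_mod G n one (replicate k f) \<nu> = (\<Sum>(l, \<mu>, ms)\<in>?T. n k l (one \<mu>) (map f ms))"
    if "pos_gapped f" for f
    using ext_mod_eq_sum_gapped_terms[OF one_gapped, of "replicate k f" \<nu>] that
    unfolding pos_gapped_def by (auto simp: terms_def map_zip_replicate intro!: sum.cong)
  have summand: "n k l (one \<mu>) (map b ms) =
      n k l (one \<mu>) (map t ms) + (if k = 1 \<and> (l, \<mu>, ms) = (0, 0, [\<nu>]) then lead (b \<nu>) else 0)"
    if p: "(l, \<mu>, ms) \<in> ?T" for l \<mu> ms
  proof (cases "\<nu> \<in> set ms")
    case False
    then have "\<forall>x\<in>set ms. x < \<nu>" using p unfolding terms_def by (auto simp: less_le subset_iff)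
    then show ?thesis using below False by (auto intro!: arg_cong[where f = "n k l (one \<mu>)"])
  next
    case True
    then obtain i where i: "i < k" "ms ! i = \<nu>" using p unfolding terms_def by (auto simp: in_set_conv_nth)
    from top_term_cases[OF p i] show ?thesis
    proof (elim disjE exE conjE)
      assume "k = 1" "l = 0" "\<mu> = 0" "ms = [\<nu>]"
      then show ?thesis using t\<nu> by (simp add: lead_def n_zero_entry)
    next
      fix i' assume i': "i' < k" "i' \<noteq> i" "ms ! i' = 0"
      moreover have "length ms = k" using p unfolding terms_def by simp
      ultimately have "n k l (one \<mu>) (map b ms) = 0" and "n k l (one \<mu>) (map t ms) = 0"
        using b t unfolding pos_gapped_def by (auto intro!: n_zero_entry[of i'])
      moreover have "k \<noteq> 1" using i i' by auto
      ultimately show ?thesis by simp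
    qed
  qed
  have "ext_mod G n one (replicate k b) \<nu> =
      (\<Sum>p\<in>?T. (case p of (l, \<mu>, ms) \<Rightarrow> n k l (one \<mu>) (map t ms))
        + (if k = 1 \<and> p = (0, 0, [\<nu>]) then lead (b \<nu>) else 0))"
    unfolding rep[OF b] by (rule sum.cong[OF refl]) (simp only: split_paired_all case_prod_conv summand)
  also have "\<dots> = ext_mod G n one (replicate k t) \<nu> + (if k = 1 then lead (b \<nu>) else 0)"
    unfolding sum.distrib rep[OF t] sum_terms_delta[OF \<nu>] by simp
  finally show ?thesis .
qed

lemma ext_mod_insert_monomial:
  assumes b: "pos_gapped b" and \<nu>: "\<nu> \<in> G"
  shows "ext_mod G n one (replicate a b @ [\<lambda>\<mu>. if \<mu> = \<nu> then c else 0] @ replicate j b) \<nu>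
       = (if a = 0 \<and> j = 0 then lead c else 0)"
proof -
  define X where "X = (\<lambda>\<mu>::real. if \<mu> = \<nu> then c else 0)"
  define xs where "xs = replicate a b @ [X] @ replicate j b"
  define K where "K = Suc (a + j)"
  have len: "length xs = K" unfolding xs_def K_def by simp
  have xa: "xs ! a = X" unfolding xs_def by (simp add: nth_append)
  have xi: "xs ! i = b" if "i < K" "i \<noteq> a" for i
    using that unfolding xs_def K_def by (cases "i < a") (auto simp: nth_append)
  have gapped: "\<forall>x\<in>set xs. gapped G x"
    using b \<nu> unfolding xs_def X_def pos_gapped_def by (auto simp: gapped_def)
  have summand: "n K l (one \<mu>) (map (\<lambda>(x, \<mu>). x \<mu>) (zip xs ms)) =
      (if (a = 0 \<and> j = 0) \<and> (l, \<mu>, ms) = (0, 0, [\<nu>]) then lead c else 0)"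
    if p: "(l, \<mu>, ms) \<in> terms (G \<inter> {..\<nu>}) K \<nu>" for l \<mu> ms
  proof -
    have lm: "length ms = K" using p unfolding terms_def by simp
    have aK: "a < K" unfolding K_def by simp
    show ?thesis
    proof (cases "ms ! a = \<nu>")
      case False
      then have "(l, \<mu>, ms) \<noteq> (0, 0, [\<nu>]) \<or> a \<noteq> 0" by (cases "a = 0") auto
      moreover have "n K l (one \<mu>) (map (\<lambda>(x, \<mu>). x \<mu>) (zip xs ms)) = 0"
        using False aK lm len xa by (intro n_zero_entry[of a]) (auto simp: X_def)
      ultimately show ?thesis by auto
    next
      case True
      from top_term_cases[OF p aK True] show ?thesis
      proof (elim disjE exE conjE)
        assume "K = 1" "l = 0" "\<mu> = 0" "ms = [\<nu>]"
        then show ?thesis using xa by (simp add: K_def xs_def X_def lead_def)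
      next
        fix i' assume "i' < K" "i' \<noteq> a" "ms ! i' = 0"
        moreover from this have "n K l (one \<mu>) (map (\<lambda>(x, \<mu>). x \<mu>) (zip xs ms)) = 0"
          using lm len xi b unfolding pos_gapped_def by (intro n_zero_entry[of i']) auto
        ultimately show ?thesis unfolding K_def by auto
      qed
    qed
  qed
  have "ext_mod G n one xs \<nu> =
      (\<Sum>p\<in>terms (G \<inter> {..\<nu>}) K \<nu>. if (a = 0 \<and> j = 0) \<and> p = (0, 0, [\<nu>]) then lead c else 0)"
    unfolding ext_mod_eq_sum_gapped_terms[OF one_gapped gapped] len
    by (rule sum.cong[OF refl]) (simp only: split_paired_all case_prod_conv summand)
  also have "\<dots> = (if (a = 0 \<and> j = 0) \<and> K = 1 then lead c else 0)"
    by (rule sum_terms_delta[OF \<nu>])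
  also have "\<dots> = (if a = 0 \<and> j = 0 then lead c else 0)"
    by (simp add: K_def)
  finally show ?thesis unfolding xs_def X_def .
qed

text \<open>\<open>dcoeff b \<nu>\<close> is the \<open>T\<^sup>\<nu>\<close>-coefficient of \<open>d\<^sup>b(1)\<close>, and \<open>mcoeff b \<nu>\<close> that of
  \<open>\<Sum>\<^sub>k m\<^sub>k(b, \<dots>, b)\<close>.\<close>
definition dcoeff :: "(real \<Rightarrow> 'c) \<Rightarrow> real \<Rightarrow> 'd" where
  "dcoeff b = series_coeff (\<lambda>k. ext_mod G n one (replicate k b))"

lemma T_sums_ext_mod_zero_iff_dcoeff:
  "pos_gapped b \<Longrightarrow> T_sums (\<lambda>k. ext_mod G n one (replicate k b)) 0 \<longleftrightarrow> dcoeff b = 0"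
  unfolding dcoeff_def using one_nov
  by (intro T_sums_zero_iff_series_coeff ext_mod_replicate_vanish)

definition mcoeff :: "(real \<Rightarrow> 'c) \<Rightarrow> real \<Rightarrow> 'c" where
  "mcoeff b = series_coeff (\<lambda>k. ext_alg G m (replicate k b))"

lemma bounding_cochain_iff_mcoeff:
  assumes "pos_gapped b"
  shows "bounding_cochain G m b \<longleftrightarrow> mcoeff b = 0"
  using assms pos_gapped_nov[OF assms] unfolding bounding_cochain_def mcoeff_def
  by (simp add: T_sums_zero_iff_series_coeff ext_alg_replicate_vanish pos_gapped_def)

lemma dcoeff_perturb:
  assumes "pos_gapped b" and "pos_gapped t" and \<nu>: "\<nu> \<in> G" "0 < \<nu>"
    and "\<forall>\<mu><\<nu>. t \<mu> = b \<mu>" and "t \<nu> = 0"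
  shows "dcoeff b \<nu> = dcoeff t \<nu> + lead (b \<nu>)"
  using max_terms_pos[OF \<nu>] unfolding dcoeff_def series_coeff_def
  by (simp add: ext_mod_replicate_perturb[OF assms(1,2,3,5,6)] sum.distrib)

lemma pos_gapped_eq_if_dcoeff_zero:
  assumes b: "pos_gapped b" and b': "pos_gapped b'" and "dcoeff b = 0" and "dcoeff b' = 0"
  shows "b = b'"
proof (rule ccontr)
  assume "b \<noteq> b'"
  then obtain \<nu> where \<nu>: "\<nu> \<in> G" and ne: "(b - b') \<nu> \<noteq> 0" and below: "\<And>\<mu>. \<mu> < \<nu> \<Longrightarrow> (b - b') \<mu> = 0"
    using gapped_least_nonzero[OF gapped_diff] b b' unfolding pos_gapped_def by (metis right_minus_eq)
  have "\<nu> \<noteq> 0" using ne b b' unfolding pos_gapped_def by auto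
  then have pos: "0 < \<nu>" using G_nonneg[OF \<nu>] by simp
  define t where "t = (\<lambda>\<mu>. if \<mu> < \<nu> then b \<mu> else 0)"
  have t: "pos_gapped t" using b pos unfolding pos_gapped_def gapped_def t_def by auto
  have "dcoeff t \<nu> + lead (b \<nu>) = dcoeff t \<nu> + lead (b' \<nu>)"
    using dcoeff_perturb[OF b t \<nu> pos] dcoeff_perturb[OF b' t \<nu> pos] below assms(3,4)
    unfolding t_def by auto
  then have "b \<nu> = b' \<nu>" using bij_lead by (simp add: bij_def inj_eq)
  then show False using ne by simp
qed

text \<open>The coefficient at \<open>\<nu>\<close> is chosen to make \<open>dcoeff\<close> vanish at \<open>\<nu>\<close>, cf. \<open>dcoeff_perturb\<close>.\<close>
definition solution :: "real \<Rightarrow> 'c" where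
  "solution = wfrec {(\<mu>, \<nu>). \<mu> \<in> G \<and> \<mu> < \<nu>}
     (\<lambda>f \<nu>. if \<nu> \<in> G \<and> 0 < \<nu> then inv lead (- dcoeff (truncate_below f \<nu>) \<nu>) else 0)"

lemma solution_eq:
  "solution \<nu> = (if \<nu> \<in> G \<and> 0 < \<nu> then inv lead (- dcoeff (truncate_below solution \<nu>) \<nu>) else 0)"
proof -
  have "truncate_below (cut solution {(\<mu>, \<nu>). \<mu> \<in> G \<and> \<mu> < \<nu>} \<nu>) \<nu> = truncate_below solution \<nu>"
    unfolding truncate_below_def by (auto simp: cut_def)
  then show ?thesis unfolding solution_def by (subst wfrec[OF wf_less_in_G]) simp
qed

lemma pos_gapped_solution: "pos_gapped solution"
  unfolding pos_gapped_def gapped_def by (metis less_irrefl solution_eq)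

lemma dcoeff_solution: "dcoeff solution = 0"
proof
  fix \<nu>
  consider "\<nu> \<in> G" "0 < \<nu>" | "\<nu> \<notin> G" | "\<nu> = 0" using G_nonneg by force
  then show "dcoeff solution \<nu> = 0 \<nu>"
  proof cases
    case 1
    let ?t = "truncate_below solution \<nu>"
    have "?t \<mu> = solution \<mu>" if "\<mu> < \<nu>" for \<mu>
      using that solution_eq[of \<mu>] unfolding truncate_below_def by auto
    then have "dcoeff solution \<nu> = dcoeff ?t \<nu> + lead (solution \<nu>)"
      using dcoeff_perturb[OF pos_gapped_solution pos_gapped_truncate_below 1]
      by (simp add: truncate_below_def)
    also have "lead (solution \<nu>) = - dcoeff ?t \<nu>"
      using solution_eq[of \<nu>] 1 surj_lead by (simp add: surj_f_inv_f)
    finally show ?thesis by simp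
  next
    case 2
    have "gapped G (dcoeff solution)"
      using pos_gapped_solution one_gapped unfolding dcoeff_def pos_gapped_def
      by (auto intro!: gapped_series_coeff ext_mod_gapped)
    then show ?thesis using 2 unfolding gapped_def by auto
  next
    case 3
    then show ?thesis using cyclic by (simp add: dcoeff_def series_coeff_def max_terms_zero cyclic_elem_def)
  qed
qed

section \<open>The solution is a bounding cochain\<close>

lemma module_relation_replicate:
  assumes "b \<in> nov"
  shows "(\<Sum>l\<le>k. ext_mod G n (ext_mod G n one (replicate l b)) (replicate (k - l) b) \<nu>)
       + (\<Sum>a\<le>k. \<Sum>c\<in>{a..k}.
           ext_mod G n one (replicate a b @ [ext_alg G m (replicate (c - a) b)] @ replicate (k - c) b) \<nu>) = 0"
proof -
  let ?xs = "replicate k b"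
  have "set ?xs \<subseteq> nov" using assms by auto
  then have "(\<Sum>l\<le>length ?xs. ext_mod G n (ext_mod G n one (take l ?xs)) (drop l ?xs))
        + (\<Sum>a\<le>length ?xs. \<Sum>c\<in>{a..length ?xs}.
           ext_mod G n one (take a ?xs @ [ext_alg G m (take (c - a) (drop a ?xs))] @ drop c ?xs)) = 0"
    using module one_nov unfolding ainf_mod_def by blast
  then have "(\<Sum>l\<le>k. ext_mod G n (ext_mod G n one (take l ?xs)) (drop l ?xs) \<nu>)
        + (\<Sum>a\<le>k. \<Sum>c\<in>{a..k}.
           ext_mod G n one (take a ?xs @ [ext_alg G m (take (c - a) (drop a ?xs))] @ drop c ?xs) \<nu>) = 0"
    unfolding fun_eq_iff by (simp add: sum_apply)
  moreover have "(\<Sum>l\<le>k. ext_mod G n (ext_mod G n one (take l ?xs)) (drop l ?xs) \<nu>)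
      = (\<Sum>l\<le>k. ext_mod G n (ext_mod G n one (replicate l b)) (replicate (k - l) b) \<nu>)"
    by (intro sum.cong refl) (simp add: take_replicate drop_replicate min_def)
  moreover have "(\<Sum>a\<le>k. \<Sum>c\<in>{a..k}.
           ext_mod G n one (take a ?xs @ [ext_alg G m (take (c - a) (drop a ?xs))] @ drop c ?xs) \<nu>)
      = (\<Sum>a\<le>k. \<Sum>c\<in>{a..k}.
           ext_mod G n one (replicate a b @ [ext_alg G m (replicate (c - a) b)] @ replicate (k - c) b) \<nu>)"
    by (intro sum.cong refl) (auto simp: take_replicate drop_replicate min_def)
  ultimately show ?thesis by simp
qed

lemma ext_mod_ext_mod_replicate_vanish:
  assumes b: "pos_gapped b" and large: "max_terms \<nu> < l \<or> max_terms \<nu> < j"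
  shows "ext_mod G n (ext_mod G n one (replicate l b)) (replicate j b) \<nu> = 0"
  using large
proof
  assume l: "max_terms \<nu> < l"
  have "max_terms \<mu> < l" if "\<mu> \<le> \<nu>" for \<mu> using monoD[OF mono_max_terms that] l by simp
  then show ?thesis
    using pos_gapped_nov[OF b]
    by (intro ext_mod_vanish_low_y) (auto intro!: ext_mod_replicate_vanish b one_nov)
next
  assume "max_terms \<nu> < j"
  then show ?thesis
    using one_gapped b
    by (intro ext_mod_replicate_vanish gapped_nov ext_mod_gapped) (auto simp: pos_gapped_def)
qed

lemma ext_mod_insert_ext_alg_vanish:
  assumes b: "pos_gapped b" and large: "max_terms \<nu> < a \<or> max_terms \<nu> < r \<or> max_terms \<nu> < j"
  shows "ext_mod G n one (replicate a b @ [ext_alg G m (replicate r b)] @ replicate j b) \<nu> = 0"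
proof -
  let ?xs = "replicate a b @ [ext_alg G m (replicate r b)] @ replicate j b"
  have "ext_alg G m (replicate r b) \<in> nov"
    using b unfolding pos_gapped_def by (intro gapped_nov ext_alg_gapped) auto
  then have xs: "set ?xs \<subseteq> nov" using pos_gapped_nov[OF b] by auto
  consider "max_terms \<nu> < a" | "max_terms \<nu> < r" | "max_terms \<nu> < j" using large by blast
  then show ?thesis
  proof cases
    case 1
    then show ?thesis
      by (intro ext_mod_vanish[OF one_nov xs, of "{..<a}" b]) (auto simp: nth_append b)
  next
    case 2
    have "ext_alg G m (replicate r b) \<mu> = 0" if "\<mu> \<le> \<nu>" for \<mu>
      using monoD[OF mono_max_terms that] 2 by (intro ext_alg_replicate_vanish b) simp
    then show ?thesis
      by (intro ext_mod_vanish_low_entry[OF one_nov xs, of a]) (auto simp: nth_append)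
  next
    case 3
    then show ?thesis
      by (intro ext_mod_vanish[OF one_nov xs, of "{Suc a..<Suc a + j}" b]) (auto simp: nth_append b)
  qed
qed

text \<open>The module relations in degrees \<open>k \<le> 4 max_terms \<nu>\<close>, summed; the summands outside the cube
  vanish at \<open>\<nu>\<close>.\<close>
lemma module_relation_cube:
  fixes \<nu> :: real
  assumes b: "pos_gapped b"
  defines "B \<equiv> max_terms \<nu>"
  shows "(\<Sum>l\<le>B. \<Sum>j\<le>B. ext_mod G n (ext_mod G n one (replicate l b)) (replicate j b) \<nu>)
       + (\<Sum>a\<le>B. \<Sum>r\<le>B. \<Sum>j\<le>B.
           ext_mod G n one (replicate a b @ [ext_alg G m (replicate r b)] @ replicate j b) \<nu>) = 0"
proof -
  define f where "f l j = ext_mod G n (ext_mod G n one (replicate l b)) (replicate j b) \<nu>" for l j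
  define h where "h a r j = ext_mod G n one (replicate a b @ [ext_alg G m (replicate r b)] @ replicate j b) \<nu>"
    for a r j
  define K where "K = Suc (4 * B)"
  have square: "(\<Sum>k<K. \<Sum>l\<le>k. f l (k - l)) = (\<Sum>l\<le>B. \<Sum>j\<le>B. f l j)"
    unfolding f_def B_def K_def
    by (rule sum_antidiagonal_eq_square) (auto intro: ext_mod_ext_mod_replicate_vanish[OF b])
  have cube: "(\<Sum>k<K. \<Sum>a\<le>k. \<Sum>c\<in>{a..k}. h a (c - a) (k - c)) = (\<Sum>a\<le>B. \<Sum>r\<le>B. \<Sum>j\<le>B. h a r j)"
    unfolding h_def B_def K_def
    by (rule sum_antidiagonal3_eq_cube) (blast intro: ext_mod_insert_ext_alg_vanish[OF b], simp)
  have "0 = (\<Sum>k<K. (\<Sum>l\<le>k. f l (k - l)) + (\<Sum>a\<le>k. \<Sum>c\<in>{a..k}. h a (c - a) (k - c)))"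
    unfolding f_def h_def using module_relation_replicate[OF pos_gapped_nov[OF b]] by simp
  also have "\<dots> = (\<Sum>l\<le>B. \<Sum>j\<le>B. f l j) + (\<Sum>a\<le>B. \<Sum>r\<le>B. \<Sum>j\<le>B. h a r j)"
    unfolding sum.distrib square cube ..
  finally show ?thesis unfolding f_def h_def by simp
qed

lemma sum_ext_mod_ext_mod_eq_zero:
  assumes b: "pos_gapped b" and d: "dcoeff b = 0"
  shows "(\<Sum>l\<le>max_terms \<nu>. \<Sum>j\<le>max_terms \<nu>. ext_mod G n (ext_mod G n one (replicate l b)) (replicate j b) \<nu>) = 0"
proof -
  let ?B = "max_terms \<nu>"
  have b_gapped: "gapped G b" using b unfolding pos_gapped_def by simp
  have E_gapped: "gapped G (ext_mod G n one (replicate l b))" for l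
    using b_gapped one_gapped by (intro ext_mod_gapped) auto
  have "(\<Sum>l\<le>?B. \<Sum>j\<le>?B. ext_mod G n (ext_mod G n one (replicate l b)) (replicate j b) \<nu>)
      = (\<Sum>j\<le>?B. ext_mod G n (\<Sum>l\<le>?B. ext_mod G n one (replicate l b)) (replicate j b) \<nu>)"
    using b_gapped by (subst sum.swap) (simp add: ext_mod_sum_left[OF E_gapped])
  also have "\<dots> = 0"
  proof (intro sum.neutral ballI ext_mod_vanish_low_y allI impI)
    fix \<mu> assume "\<mu> \<le> \<nu>"
    then have "(\<Sum>l\<le>?B. ext_mod G n one (replicate l b) \<mu>) = dcoeff b \<mu>"
      unfolding dcoeff_def using ext_mod_replicate_vanish[OF one_nov b] monoD[OF mono_max_terms]
      by (intro series_coeff_eq_partial_sum) auto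
    then show "(\<Sum>l\<le>?B. ext_mod G n one (replicate l b)) \<mu> = 0" using d by (simp add: sum_apply)
  qed (use pos_gapped_nov[OF b] in auto)
  finally show ?thesis .
qed

text \<open>Below \<open>\<nu>\<close>, the inserted entry \<open>\<Sum>\<^sub>r m\<^sub>r(b, \<dots>, b)\<close> agrees with the monomial \<open>T\<^sup>\<nu> mcoeff b \<nu>\<close>.\<close>
lemma sum_ext_mod_insert_mcoeff:
  assumes b: "pos_gapped b" and \<nu>: "\<nu> \<in> G" and below: "\<And>\<mu>. \<mu> < \<nu> \<Longrightarrow> mcoeff b \<mu> = 0"
  shows "(\<Sum>r\<le>max_terms \<nu>. ext_mod G n one (replicate a b @ [ext_alg G m (replicate r b)] @ replicate j b) \<nu>)
       = (if a = 0 \<and> j = 0 then lead (mcoeff b \<nu>) else 0)"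
proof -
  let ?B = "max_terms \<nu>"
  define X where "X = (\<Sum>r\<le>?B. ext_alg G m (replicate r b))"
  define \<delta> where "\<delta> = (\<lambda>\<mu>::real. if \<mu> = \<nu> then mcoeff b \<nu> else 0)"
  have b_gapped: "gapped G b" using b unfolding pos_gapped_def by simp
  have A_gapped: "gapped G (ext_alg G m (replicate r b))" for r
    using b_gapped by (intro ext_alg_gapped) auto
  have X_gapped: "gapped G X" unfolding X_def by (intro gapped_sum A_gapped)
  have \<delta>_gapped: "gapped G \<delta>" using \<nu> unfolding \<delta>_def gapped_def by auto
  have X\<delta>: "X \<mu> = \<delta> \<mu>" if "\<mu> \<le> \<nu>" for \<mu>
  proof -
    have "X \<mu> = mcoeff b \<mu>"
      unfolding X_def mcoeff_def sum_apply using ext_alg_replicate_vanish[OF b] monoD[OF mono_max_terms that]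
      by (intro series_coeff_eq_partial_sum) auto
    then show ?thesis using below that unfolding \<delta>_def by (cases "\<mu> = \<nu>") auto
  qed
  have mid: "\<forall>x\<in>set (replicate a b @ [0] @ replicate j b). gapped G x"
    using b_gapped by (auto simp: gapped_def)
  have "(\<Sum>r\<le>?B. ext_mod G n one (replicate a b @ [ext_alg G m (replicate r b)] @ replicate j b) \<nu>)
      = ext_mod G n one (replicate a b @ [X] @ replicate j b) \<nu>"
    using ext_mod_sum_entry[OF one_gapped mid, of a "{..?B}" "\<lambda>r. ext_alg G m (replicate r b)" \<nu>] A_gapped
    unfolding X_def by (simp add: list_update_append)
  also have "\<dots> = ext_mod G n one (replicate a b @ [\<delta>] @ replicate j b) \<nu>"
    using ext_mod_entry_local[OF one_gapped mid _ X_gapped \<delta>_gapped, of a \<nu>] X\<delta>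
    by (simp add: list_update_append)
  also have "\<dots> = (if a = 0 \<and> j = 0 then lead (mcoeff b \<nu>) else 0)"
    unfolding \<delta>_def by (rule ext_mod_insert_monomial[OF b \<nu>])
  finally show ?thesis .
qed

lemma mcoeff_zero_if_dcoeff_zero:
  assumes b: "pos_gapped b" and d: "dcoeff b = 0"
  shows "mcoeff b = 0"
proof (rule ccontr)
  have "gapped G (ext_alg G m (replicate k b))" for k
    using b unfolding pos_gapped_def by (intro ext_alg_gapped) auto
  then have "gapped G (mcoeff b)" unfolding mcoeff_def by (rule gapped_series_coeff)
  moreover assume "mcoeff b \<noteq> 0"
  ultimately obtain \<nu> where \<nu>: "\<nu> \<in> G" and ne: "mcoeff b \<nu> \<noteq> 0" and below: "\<And>\<mu>. \<mu> < \<nu> \<Longrightarrow> mcoeff b \<mu> = 0"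
    by (rule gapped_least_nonzero) auto
  let ?B = "max_terms \<nu>"
  have "(\<Sum>a\<le>?B. \<Sum>r\<le>?B. \<Sum>j\<le>?B. ext_mod G n one (replicate a b @ [ext_alg G m (replicate r b)] @ replicate j b) \<nu>)
      = (\<Sum>a\<le>?B. \<Sum>j\<le>?B. if a = 0 \<and> j = 0 then lead (mcoeff b \<nu>) else 0)"
    by (subst sum.swap) (simp only: sum_ext_mod_insert_mcoeff[OF b \<nu> below])
  also have "\<dots> = (\<Sum>a\<le>?B. if a = 0 then lead (mcoeff b \<nu>) else 0)"
  proof (rule sum.cong[OF refl])
    fix a
    show "(\<Sum>j\<le>?B. if a = 0 \<and> j = 0 then lead (mcoeff b \<nu>) else 0) = (if a = 0 then lead (mcoeff b \<nu>) else 0)"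
      by (cases "a = 0") simp_all
  qed
  also have "\<dots> = lead (mcoeff b \<nu>)" by simp
  finally have "lead (mcoeff b \<nu>) = 0"
    using module_relation_cube[OF b, of \<nu>] sum_ext_mod_ext_mod_eq_zero[OF b d, of \<nu>] by simp
  then show False using lead_eq_zero ne by blast
qed

theorem exists_unique_bounding_cochain:
  "\<exists>!b. gapped G b \<and> bounding_cochain G m b \<and> T_sums (\<lambda>k. ext_mod G n one (replicate k b)) 0"
proof (rule ex1I[of _ solution])
  show "gapped G solution \<and> bounding_cochain G m solution
      \<and> T_sums (\<lambda>k. ext_mod G n one (replicate k solution)) 0"
    using pos_gapped_solution dcoeff_solution mcoeff_zero_if_dcoeff_zero
    by (simp add: bounding_cochain_iff_mcoeff T_sums_ext_mod_zero_iff_dcoeff pos_gapped_def)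
next
  fix b assume "gapped G b \<and> bounding_cochain G m b \<and> T_sums (\<lambda>k. ext_mod G n one (replicate k b)) 0"
  then have "pos_gapped b" and "dcoeff b = 0"
    by (auto simp: pos_gapped_def bounding_cochain_def T_sums_ext_mod_zero_iff_dcoeff)
  then show "b = solution"
    using pos_gapped_eq_if_dcoeff_zero pos_gapped_solution dcoeff_solution by blast
qed

end

theorem proposition3p5:
  fixes G :: "real set"
    and m :: "nat \<Rightarrow> real \<Rightarrow> 'c::ab_group_add list \<Rightarrow> 'c"
    and n :: "nat \<Rightarrow> real \<Rightarrow> 'd::ab_group_add \<Rightarrow> 'c list \<Rightarrow> 'd"
    and one :: "real \<Rightarrow> 'd"
  assumes char2C: "\<forall>v::'c. v + v = 0"
    and char2D: "\<forall>w::'d. w + w = 0"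
    and G: "discrete_submonoid G"
    and alg: "ainf_alg G m"
    and md: "ainf_mod G m n"
    and cyc: "cyclic_elem G n one"
    and onegap: "gapped G one"
  shows "\<exists>!b. gapped G b \<and> bounding_cochain G m b
              \<and> T_sums (\<lambda>k. ext_mod G n one (replicate k b)) 0"
proof -
  interpret cyclic_module G m n one
    using G md cyc onegap by unfold_locales
  show ?thesis by (rule exists_unique_bounding_cochain)
qed

end
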